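(* Let $\pi\in S_N$ have no fixed points, and let $k=\#\{i\in[N]:\pi(i)<i\}$. Then there is a unique pair $(v,w)\in S_N\times S_N$ such that $w$ is $k$-Grassmannian, $v\le w$ in the Bruhat order, and $\pi=wv^{-1}$.
   Context: A permutation $w\in S_N$ is $k$-Grassmannian if $w(1)<\dots<w(N-k)$ and $w(N-k+1)<\dots<w(N)$. Products are composed right to left: $(wv^{-1})(j)=w(v^{-1}(j))$. *)

theory Defs
  imports "HOL-Combinatorics.Combinatorics"
begin

text \<open>Permutations of [N] = {1..N} are functions nat => nat that permute {1..N}.\<close>

definition grassmannian :: "nat \<Rightarrow> nat \<Rightarrow> (nat \<Rightarrow> nat) \<Rightarrow> bool" where
  "grassmannian N k w \<longleftrightarrow>
     (\<forall>i j. 1 \<le> i \<and> i < j \<and> j \<le> N - k \<longrightarrow> w i < w j) \<and>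
     (\<forall>i j. N - k + 1 \<le> i \<and> i < j \<and> j \<le> N \<longrightarrow> w i < w j)"

definition perm_length :: "nat \<Rightarrow> (nat \<Rightarrow> nat) \<Rightarrow> nat" where
  "perm_length N w = card {(i, j). 1 \<le> i \<and> i < j \<and> j \<le> N \<and> w j < w i}"

inductive bruhat_le :: "nat \<Rightarrow> (nat \<Rightarrow> nat) \<Rightarrow> (nat \<Rightarrow> nat) \<Rightarrow> bool" for N where
  refl: "u permutes {1..N} \<Longrightarrow> bruhat_le N u u"
| step: "bruhat_le N u v \<Longrightarrow> a \<in> {1..N} \<Longrightarrow> b \<in> {1..N} \<Longrightarrow> a \<noteq> b \<Longrightarrow>
         perm_length N v < perm_length N (v \<circ> Transposition.transpose a b) \<Longrightarrow>
         bruhat_le N u (v \<circ> Transposition.transpose a b)"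

end

(* Proof idea: for a Grassmannian w, the relation v <= w in the Bruhat order is equivalent to
   v(i) <= w(i) on the first block {1..N-k} and v(i) >= w(i) on the second block.  Along the
   Bruhat order, the number of large values in a prefix and of small values in a suffix can only
   grow, which gives one direction; conversely, a v satisfying the inequalities can be raised to w
   by length-increasing transpositions that keep them.  With pi = w v^-1 and pi fixed-point free,
   the inequalities say precisely that v maps the second block onto {i. pi(i) < i}.  Hence w is the
   unique Grassmannian permutation mapping its second block onto pi {i. pi(i) < i}, and v = pi^-1 w. *)

theory Submission
  imports Defs
begin

lemma finite_inversions: "finite {(i, j). 1 \<le> i \<and> i < j \<and> j \<le> N \<and> (w::nat\<Rightarrow>nat) j < w i}"
  by (rule finite_subset[of _ "{1..N} \<times> {1..N}"]) auto

lemma perm_length_le: "perm_length N w \<le> N * N"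
proof -
  have "perm_length N w \<le> card ({1..N} \<times> {1..N})"
    unfolding perm_length_def by (rule card_mono) auto
  then show ?thesis by simp
qed

text \<open>With t = (a b), an inversion (i, j) of u yields the inversion (t i, t j) of u \<circ> t if
  t i < t j and is itself an inversion of u \<circ> t otherwise; this map is injective and misses the
  new inversion (a, b).\<close>
lemma perm_length_transpose_ascent:
  fixes u :: "nat \<Rightarrow> nat"
  assumes ab: "1 \<le> a" "a < b" "b \<le> N" and ascent: "u a < u b"
  shows "perm_length N u < perm_length N (u \<circ> Transposition.transpose a b)"
proof -
  define t where "t = Transposition.transpose a b"
  define I where "I = {(i, j). 1 \<le> i \<and> i < j \<and> j \<le> N \<and> u j < u i}"
  define I' where "I' = {(i, j). 1 \<le> i \<and> i < j \<and> j \<le> N \<and> u (t j) < u (t i)}"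
  define \<phi> where "\<phi> = (\<lambda>(i, j). if t i < t j then (t i, t j) else (i, j))"
  have tt: "t (t x) = x" for x
    unfolding t_def by simp
  have "inj_on \<phi> I"
  proof (rule inj_onI, clarify)
    fix i j i' j' assume "(i, j) \<in> I" "(i', j') \<in> I" "\<phi> (i, j) = \<phi> (i', j')"
    then show "i = i' \<and> j = j'"
      unfolding \<phi>_def I_def by (auto split: if_splits) (metis tt)+
  qed
  moreover have "\<phi> ` I \<subseteq> I' - {(a, b)}"
    using ab ascent unfolding \<phi>_def I_def I'_def t_def
    by (auto simp: transpose_def split: if_splits)
  moreover have "(a, b) \<in> I'"
    using ab ascent unfolding I'_def t_def by auto
  moreover have "finite I'"
    unfolding I'_def using finite_inversions[of N "u \<circ> t"] by simp
  ultimately have "card I < card I'"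
    by (metis card_Diff1_less card_image card_mono finite_Diff le_less_trans)
  then show ?thesis
    unfolding perm_length_def I_def I'_def t_def by simp
qed

lemma perm_length_transpose_less_imp_ascent:
  fixes v :: "nat \<Rightarrow> nat"
  assumes v: "v permutes {1..N}" and ab: "a \<in> {1..N}" "b \<in> {1..N}" "a < b"
    and longer: "perm_length N v < perm_length N (v \<circ> Transposition.transpose a b)"
  shows "v a < v b"
proof (rule ccontr)
  assume "\<not> v a < v b"
  moreover have "v a \<noteq> v b"
    using ab permutes_inj[OF v] by (metis inj_eq less_irrefl)
  ultimately have "(v \<circ> Transposition.transpose a b) a < (v \<circ> Transposition.transpose a b) b"
    by simp
  moreover have "v \<circ> Transposition.transpose a b \<circ> Transposition.transpose a b = v"
    by (simp add: fun_eq_iff)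
  ultimately have "perm_length N (v \<circ> Transposition.transpose a b) < perm_length N v"
    using perm_length_transpose_ascent[of a b N "v \<circ> Transposition.transpose a b"] ab by simp
  with longer show False by simp
qed

lemma card_filter_transpose_mono:
  fixes u :: "'a \<Rightarrow> 'b"
  assumes "finite I"
    and "a \<in> I \<Longrightarrow> b \<notin> I \<Longrightarrow> Q (u a) \<Longrightarrow> Q (u b)"
    and "b \<in> I \<Longrightarrow> a \<notin> I \<Longrightarrow> Q (u b) \<Longrightarrow> Q (u a)"
  shows "card {x\<in>I. Q (u x)} \<le> card {x\<in>I. Q ((u \<circ> Transposition.transpose a b) x)}"
proof (cases "a \<in> I \<longleftrightarrow> b \<in> I")
  case True
  then have "Transposition.transpose a b x \<in> I \<longleftrightarrow> x \<in> I" for x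
    by (metis in_transpose_image_iff transpose_image_eq)
  then have "{x\<in>I. Q ((u \<circ> Transposition.transpose a b) x)} = Transposition.transpose a b ` {x\<in>I. Q (u x)}"
    by (auto simp: in_transpose_image_iff)
  then show ?thesis
    by (simp add: card_image inj_on_subset)
next
  case False
  have "Q (u (Transposition.transpose a b x))" if "x \<in> I" "Q (u x)" for x
    using False assms(2,3) that by (cases "x = a"; cases "x = b") simp_all
  then have "{x\<in>I. Q (u x)} \<subseteq> {x\<in>I. Q ((u \<circ> Transposition.transpose a b) x)}"
    by auto
  then show ?thesis
    using assms(1) by (intro card_mono) auto
qed

lemma bruhat_le_permutes:
  assumes "bruhat_le N u v"
  shows "u permutes {1..N}" "v permutes {1..N}"
  using assms
proof (induction rule: bruhat_le.induct)
  case (step u v a b)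
  then show "u permutes {1..N}" "v \<circ> Transposition.transpose a b permutes {1..N}"
    by (auto intro: permutes_compose[OF permutes_swap_id])
qed

lemma bruhat_le_trans:
  assumes "bruhat_le N u v" "bruhat_le N v w"
  shows "bruhat_le N u w"
  using assms(2,1)
  by (induction rule: bruhat_le.induct) (auto intro: bruhat_le.step)

lemma bruhat_le_step_ascent:
  assumes "bruhat_le N u v" and ab: "a \<in> {1..N}" "b \<in> {1..N}"
    and longer: "perm_length N v < perm_length N (v \<circ> Transposition.transpose a b)"
  shows "a < b \<Longrightarrow> v a < v b" and "b < a \<Longrightarrow> v b < v a"
proof -
  have v: "v permutes {1..N}"
    using bruhat_le_permutes(2)[OF assms(1)] .
  show "a < b \<Longrightarrow> v a < v b"
    using perm_length_transpose_less_imp_ascent[OF v ab _ longer] .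
  show "b < a \<Longrightarrow> v b < v a"
    using perm_length_transpose_less_imp_ascent[OF v ab(2,1) _ longer[unfolded transpose_commute[of a b]]] .
qed

lemma bruhat_le_card_prefix_greater:
  assumes "bruhat_le N u v"
  shows "card {x\<in>{1..p}. c < u x} \<le> card {x\<in>{1..p}. c < v x}"
  using assms
proof (induction rule: bruhat_le.induct)
  case (step u v a b)
  have "card {x\<in>{1..p}. c < v x} \<le> card {x\<in>{1..p}. c < (v \<circ> Transposition.transpose a b) x}"
    using bruhat_le_step_ascent[OF step(1-3,5)] step(2,3)
    by (intro card_filter_transpose_mono) auto
  with step.IH show ?case by simp
qed simp

lemma bruhat_le_card_suffix_less:
  assumes "bruhat_le N u v"
  shows "card {x\<in>{p..N}. u x < c} \<le> card {x\<in>{p..N}. v x < c}"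
  using assms
proof (induction rule: bruhat_le.induct)
  case (step u v a b)
  have "card {x\<in>{p..N}. v x < c} \<le> card {x\<in>{p..N}. (v \<circ> Transposition.transpose a b) x < c}"
    using bruhat_le_step_ascent[OF step(1-3,5)] step(2,3)
    by (intro card_filter_transpose_mono) auto
  with step.IH show ?case by simp
qed simp

definition split_dominated :: "nat \<Rightarrow> nat \<Rightarrow> (nat \<Rightarrow> nat) \<Rightarrow> (nat \<Rightarrow> nat) \<Rightarrow> bool" where
  "split_dominated N m v w \<longleftrightarrow> (\<forall>p\<in>{1..m}. v p \<le> w p) \<and> (\<forall>p\<in>{m<..N}. w p \<le> v p)"

lemma bruhat_le_imp_split_dominated:
  assumes vw: "bruhat_le N v w"
    and w1: "strict_mono_on {1..m} w" and w2: "strict_mono_on {m<..N} w"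
  shows "split_dominated N m v w"
  unfolding split_dominated_def
proof safe
  fix p assume p: "p \<in> {1..m}"
  have "{x\<in>{1..p}. w p < w x} = {}"
    using p strict_mono_on_less_eq[OF w1] by (auto simp: not_less)
  then have "card {x\<in>{1..p}. w p < v x} = 0"
    using bruhat_le_card_prefix_greater[OF vw, of p "w p"] by (simp only: card.empty le_zero_eq)
  then show "v p \<le> w p"
    using p by (auto simp: card_eq_0_iff not_less)
next
  fix p assume p: "p \<in> {m<..N}"
  have "{x\<in>{p..N}. w x < w p} = {}"
    using p strict_mono_on_less_eq[OF w2] by (auto simp: not_less)
  then have "card {x\<in>{p..N}. v x < w p} = 0"
    using bruhat_le_card_suffix_less[OF vw, of p "w p"] by (simp only: card.empty le_zero_eq)
  then show "w p \<le> v p"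
    using p by (auto simp: card_eq_0_iff not_less)
qed

lemma card_filter_permutes:
  assumes "v permutes S"
  shows "card {p\<in>S. Q (v p)} = card {z\<in>S. Q z}"
proof -
  have "v ` {p\<in>S. Q (v p)} = {z\<in>S. Q z}"
    using assms by (auto simp: permutes_in_image image_iff)
      (metis permutes_inverses(1) permutes_in_image[OF permutes_inv[OF assms]])
  then show ?thesis
    using permutes_inj_on[OF assms] by (metis card_image)
qed

lemma permutes_max_disagreement:
  fixes v w :: "'a::linorder \<Rightarrow> 'a"
  assumes v: "v permutes S" and w: "w permutes S" and "finite S" and "v \<noteq> w"
  obtains x where "x \<in> S" "v x \<noteq> w x"
    and "\<And>p. p \<in> S \<Longrightarrow> v x < v p \<Longrightarrow> v p = w p"
    and "\<And>p. p \<in> S \<Longrightarrow> v x < w p \<Longrightarrow> v p = w p"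
proof -
  define D where "D = {p\<in>S. v p \<noteq> w p}"
  have "D \<noteq> {}"
  proof
    assume "D = {}"
    then have "v p = w p" for p
      using permutes_not_in[OF v, of p] permutes_not_in[OF w, of p] unfolding D_def by (cases "p \<in> S") auto
    with \<open>v \<noteq> w\<close> show False by auto
  qed
  moreover have "finite D"
    unfolding D_def using \<open>finite S\<close> by simp
  ultimately obtain x where x: "x \<in> D" "v x = Max (v ` D)"
    by (metis (mono_tags, lifting) Max_in finite_imageI image_iff image_is_empty)
  have top: "\<forall>p\<in>S. v x < v p \<longrightarrow> v p = w p"
  proof (intro ballI impI; rule ccontr)
    fix p assume "p \<in> S" "v x < v p" "v p \<noteq> w p"
    then have "v p \<le> v x"
      using x Max_ge[OF finite_imageI[OF \<open>finite D\<close>], of "v p" v] unfolding D_def by auto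
    with \<open>v x < v p\<close> show False by simp
  qed
  moreover have "\<forall>p\<in>S. v x < w p \<longrightarrow> v p = w p"
  proof (intro ballI impI)
    fix p assume "p \<in> S" "v x < w p"
    then obtain q where q: "q \<in> S" "v q = w p"
      by (metis permutes_in_image[OF w] permutes_image[OF v] imageE)
    then have "w q = w p"
      using top \<open>v x < w p\<close> by auto
    then show "v p = w p"
      using q permutes_inj[OF w] by (metis injD)
  qed
  ultimately show ?thesis
    using that x unfolding D_def by blast
qed

text \<open>v and w have equally many positions with value at least w x; without such an r,
  those of v would all be positions of w other than y.\<close>
lemma split_dominated_value_between:
  assumes v: "v permutes {1..N}" and w: "w permutes {1..N}"
    and w2: "strict_mono_on {m<..N} w" and dom: "split_dominated N m v w"
    and x: "x \<in> {m<..N}" "w x < v x" and y: "y \<in> {1..m}" "w y = v x"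
    and top: "\<And>p. p \<in> {1..N} \<Longrightarrow> v x < v p \<Longrightarrow> v p = w p"
  shows "\<exists>r. y \<le> r \<and> r < x \<and> w x \<le> v r \<and> v r < v x"
proof (rule ccontr)
  assume none: "\<not> ?thesis"
  define Vs where "Vs = {p\<in>{1..N}. w x \<le> v p}"
  define Ws where "Ws = {p\<in>{1..N}. w x \<le> w p}"
  have "card Vs = card Ws"
    unfolding Vs_def Ws_def using card_filter_permutes[OF v] card_filter_permutes[OF w] by metis
  have "Vs \<subseteq> Ws - {y}"
  proof
    fix p assume p: "p \<in> Vs"
    consider "p < y" | "y \<le> p" "p < x" | "x \<le> p"
      by linarith
    then show "p \<in> Ws - {y}"
    proof cases
      case 1
      with p y have "p \<in> {1..m}"
        unfolding Vs_def by auto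
      then have "v p \<le> w p"
        using dom unfolding split_dominated_def by auto
      with 1 p show ?thesis
        unfolding Vs_def Ws_def by auto
    next
      case 2
      then have "\<not> v p < v x"
        using p none unfolding Vs_def by auto
      moreover have "v p \<noteq> v x"
        using 2 permutes_inj[OF v] by (metis inj_eq less_irrefl)
      ultimately have "v x < v p"
        by simp
      then show ?thesis
        using p top y unfolding Vs_def Ws_def by auto
    next
      case 3
      then show ?thesis
        using p x y strict_mono_on_less_eq[OF w2, of x p] unfolding Vs_def Ws_def by auto
    qed
  qed
  moreover have "y \<in> Ws"
    using x y unfolding Ws_def by auto
  moreover have "finite Ws"
    unfolding Ws_def by simp
  ultimately have "card Vs < card Ws"
    by (meson card_Diff1_less card_mono finite_Diff le_less_trans)
  with \<open>card Vs = card Ws\<close> show False by simp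
qed

text \<open>The swap exchanges the position x of the largest value v x at which v and w disagree,
  which lies in the second block, with a position r before x whose value lies between w x and v x;
  the position y of the value v x under w lies in the first block and bounds r from below.\<close>
lemma split_dominated_ascent:
  assumes v: "v permutes {1..N}" and w: "w permutes {1..N}"
    and w1: "strict_mono_on {1..m} w" and w2: "strict_mono_on {m<..N} w"
    and dom: "split_dominated N m v w" and "v \<noteq> w"
  shows "\<exists>a b. 1 \<le> a \<and> a < b \<and> b \<le> N \<and> v a < v b \<and>
    split_dominated N m (v \<circ> Transposition.transpose a b) w"
proof -
  obtain x where xN: "x \<in> {1..N}" and vwx: "v x \<noteq> w x"
    and top: "\<And>p. p \<in> {1..N} \<Longrightarrow> v x < v p \<Longrightarrow> v p = w p"
    and top': "\<And>p. p \<in> {1..N} \<Longrightarrow> v x < w p \<Longrightarrow> v p = w p"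
    using permutes_max_disagreement[OF v w _ \<open>v \<noteq> w\<close>] by blast
  have dom1: "p \<in> {1..m} \<Longrightarrow> v p \<le> w p" and dom2: "p \<in> {m<..N} \<Longrightarrow> w p \<le> v p" for p
    using dom unfolding split_dominated_def by auto
  have x: "x \<in> {m<..N}"
  proof (rule ccontr)
    assume "x \<notin> {m<..N}"
    then have "v x < w x"
      using xN vwx dom1[of x] by auto
    with top'[OF xN] vwx show False by simp
  qed
  then have wx: "w x < v x"
    using vwx dom2 by (simp add: order_less_le)
  obtain y where yN: "y \<in> {1..N}" and wy: "w y = v x"
    using xN permutes_in_image[OF v] permutes_image[OF w] by (metis imageE)
  have y: "y \<in> {1..m}"
  proof (rule ccontr)
    assume "y \<notin> {1..m}"
    then have "w y \<le> v y"
      using yN dom2 by auto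
    moreover have "v y \<noteq> v x"
      using wx wy permutes_inj[OF v] by (metis inj_eq less_irrefl)
    ultimately have "v x < v y"
      using wy by simp
    with top[OF yN] wy show False by simp
  qed
  obtain r where ry: "y \<le> r" and rx: "r < x" and vr: "w x \<le> v r" "v r < v x"
    using split_dominated_value_between[OF v w w2 dom x wx y wy top] by blast
  have "split_dominated N m (v \<circ> Transposition.transpose r x) w"
    unfolding split_dominated_def
  proof safe
    fix p assume p: "p \<in> {1..m}"
    show "(v \<circ> Transposition.transpose r x) p \<le> w p"
    proof (cases "p = r")
      case True
      then have "w y \<le> w p"
        using p y ry strict_mono_on_less_eq[OF w1] by auto
      with True wy show ?thesis by simp
    next
      case False
      moreover have "p \<noteq> x"
        using p x by auto
      ultimately show ?thesis
        using dom1[OF p] by simp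
    qed
  next
    fix p assume p: "p \<in> {m<..N}"
    show "w p \<le> (v \<circ> Transposition.transpose r x) p"
    proof (cases "p = r")
      case True
      then have "w p < w x"
        using p x rx strict_mono_on_less[OF w2] by auto
      with True wx show ?thesis by simp
    next
      case False
      then show ?thesis
        using dom2[OF p] vr by (cases "p = x") simp_all
    qed
  qed
  moreover have "1 \<le> r" "x \<le> N"
    using ry y x by auto
  ultimately show ?thesis
    using rx vr by blast
qed

lemma split_dominated_imp_bruhat_le:
  assumes w: "w permutes {1..N}"
    and w1: "strict_mono_on {1..m} w" and w2: "strict_mono_on {m<..N} w"
    and "v permutes {1..N}" and "split_dominated N m v w"
  shows "bruhat_le N v w"
  using assms(4,5)
proof (induction "N * N - perm_length N v" arbitrary: v rule: less_induct)
  case less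
  show ?case
  proof (cases "v = w")
    case True
    then show ?thesis
      using less.prems by (simp add: bruhat_le.refl)
  next
    case False
    then obtain a b where ab: "1 \<le> a" "a < b" "b \<le> N" "v a < v b"
      and dom': "split_dominated N m (v \<circ> Transposition.transpose a b) w"
      using split_dominated_ascent[OF less.prems(1) w w1 w2 less.prems(2)] by blast
    define v' where "v' = v \<circ> Transposition.transpose a b"
    have v': "v' permutes {1..N}"
      unfolding v'_def using ab less.prems(1) by (auto intro: permutes_compose[OF permutes_swap_id])
    have longer: "perm_length N v < perm_length N v'"
      unfolding v'_def using perm_length_transpose_ascent[OF ab] .
    then have "bruhat_le N v' w"
      using less.hyps[OF _ v' dom'[folded v'_def]] perm_length_le[of N v'] by linarith
    moreover have "bruhat_le N v v'"
      unfolding v'_def using ab longer[unfolded v'_def] less.prems(1)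
      by (intro bruhat_le.step bruhat_le.refl) auto
    ultimately show ?thesis
      using bruhat_le_trans by blast
  qed
qed

lemma grassmannian_iff_strict_mono_on:
  "grassmannian N k w \<longleftrightarrow> strict_mono_on {1..N - k} w \<and> strict_mono_on {N - k<..N} w"
  unfolding grassmannian_def strict_mono_on_def by (auto simp: Suc_le_eq)

lemma strict_mono_on_eq_if_image_eq:
  fixes f g :: "'a::linorder \<Rightarrow> 'b::linorder"
  assumes "finite I" and f: "strict_mono_on I f" and g: "strict_mono_on I g"
    and "f ` I = g ` I" and "x \<in> I"
  shows "f x = g x"
proof -
  define xs where "xs = sorted_list_of_set I"
  have xs: "sorted_wrt (<) xs" "set xs = I"
    unfolding xs_def using \<open>finite I\<close> by simp_all
  have "sorted_wrt (<) (map h xs)" if "strict_mono_on I h" for h :: "'a \<Rightarrow> 'b"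
    unfolding sorted_wrt_map using xs that by (auto intro: sorted_wrt_mono_rel strict_mono_onD)
  then have "map g xs = map f xs"
    using f g xs \<open>f ` I = g ` I\<close> by (intro strict_sorted_equal) auto
  then show ?thesis
    using xs \<open>x \<in> I\<close> by simp
qed

lemma strict_mono_on_onto:
  fixes S :: "'a::linorder set"
  assumes "finite S"
  obtains f where "strict_mono_on {a<..a + card S} f" and "f ` {a<..a + card S} = S"
proof
  define xs where "xs = sorted_list_of_set S"
  have xs: "sorted_wrt (<) xs" "set xs = S" "length xs = card S"
    unfolding xs_def using assms by simp_all
  show "strict_mono_on {a<..a + card S} (\<lambda>p. xs ! (p - Suc a))"
  proof (rule strict_mono_onI)
    fix r s assume "r \<in> {a<..a + card S}" "s \<in> {a<..a + card S}" "r < s"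
    then show "xs ! (r - Suc a) < xs ! (s - Suc a)"
      using xs by (intro sorted_wrt_nth_less[OF xs(1)]) auto
  qed
  show "(\<lambda>p. xs ! (p - Suc a)) ` {a<..a + card S} = S"
  proof (intro equalityI subsetI)
    fix s assume "s \<in> (\<lambda>p. xs ! (p - Suc a)) ` {a<..a + card S}"
    then show "s \<in> S"
      using xs by auto
  next
    fix s assume "s \<in> S"
    then obtain i where "i < card S" "s = xs ! i"
      using xs by (metis in_set_conv_nth)
    then show "s \<in> (\<lambda>p. xs ! (p - Suc a)) ` {a<..a + card S}"
      by (intro image_eqI[of _ _ "i + Suc a"]) auto
  qed
qed

lemma grassmannian_eq_if_image_eq:
  assumes w1: "w1 permutes {1..N}" and w2: "w2 permutes {1..N}"
    and g1: "grassmannian N k w1" and g2: "grassmannian N k w2"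
    and im: "w1 ` {N - k<..N} = w2 ` {N - k<..N}"
  shows "w1 = w2"
proof
  fix p
  have split: "{1..N - k} = {1..N} - {N - k<..N}"
    by auto
  have "w1 ` {1..N - k} = w2 ` {1..N - k}"
    unfolding split image_set_diff[OF permutes_inj[OF w1]] image_set_diff[OF permutes_inj[OF w2]]
      permutes_image[OF w1] permutes_image[OF w2] im ..
  then have first: "p \<in> {1..N - k} \<Longrightarrow> w1 p = w2 p"
    using g1 g2 unfolding grassmannian_iff_strict_mono_on by (blast intro: strict_mono_on_eq_if_image_eq)
  have second: "p \<in> {N - k<..N} \<Longrightarrow> w1 p = w2 p"
    using g1 g2 im unfolding grassmannian_iff_strict_mono_on by (blast intro: strict_mono_on_eq_if_image_eq)
  consider "p \<in> {1..N - k}" | "p \<in> {N - k<..N}" | "p \<notin> {1..N}"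
    by fastforce
  then show "w1 p = w2 p"
    using first second permutes_not_in[OF w1] permutes_not_in[OF w2] by cases auto
qed

lemma grassmannian_exists:
  assumes B: "B \<subseteq> {1..N}" and k: "card B = k"
  obtains w where "w permutes {1..N}" and "grassmannian N k w" and "w ` {N - k<..N} = B"
proof -
  define m where "m = N - k"
  define C where "C = {1..N} - B"
  have "finite B"
    using B finite_subset by blast
  have N: "N = m + card B"
    using card_mono[OF _ B] k unfolding m_def by simp
  have "card C = m"
    unfolding C_def m_def using card_Diff_subset[OF \<open>finite B\<close> B] k by simp
  then obtain f where f: "strict_mono_on {1..m} f" "f ` {1..m} = C"
    using strict_mono_on_onto[of C 0] unfolding C_def atLeastSucAtMost_greaterThanAtMost[symmetric]
    by auto
  obtain g where g: "strict_mono_on {m<..N} g" "g ` {m<..N} = B"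
    using strict_mono_on_onto[OF \<open>finite B\<close>, of m] N by metis
  define w where "w p = (if p \<in> {1..m} then f p else if p \<in> {m<..N} then g p else p)" for p
  have w1: "w ` {1..m} = C" and w2: "w ` {m<..N} = B"
    using f(2) g(2) unfolding w_def by (auto simp: image_def)
  have blocks: "{1..N} = {1..m} \<union> {m<..N}"
    using N by auto
  then have "w ` {1..N} = {1..N}"
    using w1 w2 B unfolding C_def by auto
  then have "bij_betw w {1..N} {1..N}"
    by (simp add: bij_betw_def eq_card_imp_inj_on)
  then have "w permutes {1..N}"
    by (rule bij_imp_permutes) (use blocks in \<open>auto simp: w_def\<close>)
  moreover have "grassmannian N k w"
    unfolding grassmannian_iff_strict_mono_on m_def[symmetric]
    using f(1) g(1) unfolding w_def strict_mono_on_def by auto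
  ultimately show ?thesis
    using that w2 unfolding m_def by blast
qed

lemma split_dominated_comp_iff:
  assumes \<pi>: "\<pi> permutes {1..N}" and v: "v permutes {1..N}"
    and fix_free: "\<forall>i\<in>{1..N}. \<pi> i \<noteq> i"
  shows "split_dominated N m v (\<pi> \<circ> v) \<longleftrightarrow> v ` {m<..N} = {i\<in>{1..N}. \<pi> i < i}"
proof -
  define A where "A = {i\<in>{1..N}. \<pi> i < i}"
  have vA: "v p \<in> A \<longleftrightarrow> \<pi> (v p) < v p" and moved: "\<pi> (v p) \<noteq> v p" if "p \<in> {1..N}" for p
    using that fix_free permutes_in_image[OF v] unfolding A_def by auto
  have outside: "p \<notin> {1..N} \<Longrightarrow> \<pi> (v p) = v p" for p
    using permutes_not_in[OF v] permutes_not_in[OF \<pi>] by metis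
  have "(\<forall>p\<in>{1..m}. v p \<le> \<pi> (v p)) \<longleftrightarrow> (\<forall>p\<in>{1..N}. v p \<in> A \<longrightarrow> m < p)"
  proof safe
    fix p assume "\<forall>p\<in>{1..m}. v p \<le> \<pi> (v p)" "p \<in> {1..N}" "v p \<in> A"
    then show "m < p"
      using vA by (metis atLeastAtMost_iff not_le not_less)
  next
    fix p assume "\<forall>p\<in>{1..N}. v p \<in> A \<longrightarrow> m < p" "p \<in> {1..m}"
    then show "v p \<le> \<pi> (v p)"
      using vA outside by (cases "p \<in> {1..N}") (auto simp: not_less)
  qed
  moreover have "(\<forall>p\<in>{m<..N}. \<pi> (v p) \<le> v p) \<longleftrightarrow> (\<forall>p\<in>{1..N}. m < p \<longrightarrow> v p \<in> A)"
    using vA moved by (auto simp: order_le_less)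
  ultimately have "split_dominated N m v (\<pi> \<circ> v) \<longleftrightarrow> (\<forall>p\<in>{1..N}. v p \<in> A \<longleftrightarrow> m < p)"
    unfolding split_dominated_def by auto
  also have "\<dots> \<longleftrightarrow> v ` {m<..N} = A"
  proof
    assume "\<forall>p\<in>{1..N}. v p \<in> A \<longleftrightarrow> m < p"
    moreover have "A \<subseteq> v ` {1..N}"
      unfolding A_def permutes_image[OF v] by auto
    ultimately show "v ` {m<..N} = A"
      by (force simp: image_subset_iff)
  next
    assume "v ` {m<..N} = A"
    moreover have "v p \<in> v ` {m<..N} \<longleftrightarrow> p \<in> {m<..N}" for p
      by (rule inj_image_mem_iff[OF permutes_inj[OF v]])
    ultimately show "\<forall>p\<in>{1..N}. v p \<in> A \<longleftrightarrow> m < p"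
      by auto
  qed
  finally show ?thesis
    unfolding A_def .
qed

lemma bruhat_le_grassmannian_iff:
  assumes "w permutes {1..N}" and "grassmannian N k w"
  shows "bruhat_le N v w \<longleftrightarrow> v permutes {1..N} \<and> split_dominated N (N - k) v w"
  using assms bruhat_le_permutes(1) bruhat_le_imp_split_dominated split_dominated_imp_bruhat_le
  unfolding grassmannian_iff_strict_mono_on by blast

lemma eq_comp_inv_iff:
  assumes "v permutes S"
  shows "\<pi> = w \<circ> inv v \<longleftrightarrow> w = \<pi> \<circ> v"
  using permutes_inv_o[OF assms] by (metis comp_id o_assoc)

lemma bruhat_factorization_iff:
  assumes \<pi>: "\<pi> permutes {1..N}" and fix_free: "\<forall>i\<in>{1..N}. \<pi> i \<noteq> i"
    and w: "w permutes {1..N}" and grass: "grassmannian N k w"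
  shows "bruhat_le N v w \<and> \<pi> = w \<circ> inv v \<longleftrightarrow>
    v = inv \<pi> \<circ> w \<and> w ` {N - k<..N} = \<pi> ` {i\<in>{1..N}. \<pi> i < i}"
    (is "_ \<longleftrightarrow> _ \<and> _ = \<pi> ` ?A")
proof
  assume "bruhat_le N v w \<and> \<pi> = w \<circ> inv v"
  then have v: "v permutes {1..N}" and "split_dominated N (N - k) v w" and wv: "w = \<pi> \<circ> v"
    using bruhat_le_grassmannian_iff[OF w grass] eq_comp_inv_iff[of v] by blast+
  then have "v ` {N - k<..N} = ?A"
    using split_dominated_comp_iff[OF \<pi> v fix_free] by simp
  moreover have "v = inv \<pi> \<circ> w"
    unfolding wv by (simp add: o_assoc permutes_inv_o(2)[OF \<pi>])
  ultimately show "v = inv \<pi> \<circ> w \<and> w ` {N - k<..N} = \<pi> ` ?A"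
    unfolding wv image_comp[symmetric] by simp
next
  assume "v = inv \<pi> \<circ> w \<and> w ` {N - k<..N} = \<pi> ` ?A"
  then have vw: "v = inv \<pi> \<circ> w" and wA: "w ` {N - k<..N} = \<pi> ` ?A"
    by simp_all
  have v: "v permutes {1..N}"
    unfolding vw using permutes_compose[OF w permutes_inv[OF \<pi>]] .
  have wv: "w = \<pi> \<circ> v"
    unfolding vw by (simp add: o_assoc permutes_inv_o[OF \<pi>])
  have "v ` {N - k<..N} = ?A"
    unfolding vw image_comp[symmetric] wA by (simp add: image_comp permutes_inv_o(2)[OF \<pi>])
  then have "bruhat_le N v w"
    using bruhat_le_grassmannian_iff[OF w grass] split_dominated_comp_iff[OF \<pi> v fix_free] v wv
    by simp
  moreover have "\<pi> = w \<circ> inv v"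
    using eq_comp_inv_iff[OF v] wv by blast
  ultimately show "bruhat_le N v w \<and> \<pi> = w \<circ> inv v" ..
qed

theorem corollary3p1:
  fixes N :: nat and \<pi> :: "nat \<Rightarrow> nat"
  assumes "\<pi> permutes {1..N}"
    and "\<forall>i\<in>{1..N}. \<pi> i \<noteq> i"
    and "k = card {i \<in> {1..N}. \<pi> i < i}"
  shows "\<exists>!p. fst p permutes {1..N} \<and> snd p permutes {1..N} \<and>
              grassmannian N k (snd p) \<and> bruhat_le N (fst p) (snd p) \<and>
              \<pi> = snd p \<circ> inv (fst p)"
proof -
  let ?B = "\<pi> ` {i\<in>{1..N}. \<pi> i < i}"
  have "?B \<subseteq> {1..N}" and "card ?B = k"
    using permutes_in_image[OF assms(1)] card_image[OF permutes_inj_on[OF assms(1)]] assms(3)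
    by blast+
  then obtain w where w: "w permutes {1..N}" "grassmannian N k w" and wB: "w ` {N - k<..N} = ?B"
    by (rule grassmannian_exists)
  note factorization = bruhat_factorization_iff[OF assms(1,2)]
  show ?thesis
  proof (rule ex1I[of _ "(inv \<pi> \<circ> w, w)"], goal_cases)
    case 1
    show ?case
      using factorization[OF w] wB permutes_compose[OF w(1) permutes_inv[OF assms(1)]] w by simp
  next
    case (2 q)
    then have fst_q: "fst q = inv \<pi> \<circ> snd q" and "snd q ` {N - k<..N} = ?B"
      using factorization[where w = "snd q" and v = "fst q"] by blast+
    then have "snd q = w"
      using grassmannian_eq_if_image_eq[of "snd q" N w k] 2 w wB by blast
    with fst_q show "q = (inv \<pi> \<circ> w, w)"
      by (simp add: prod_eq_iff)
  qed
qed

end
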